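(* Let $r,s,t,a,b,c$ be real numbers with $t\neq0$, and let $M_{H,n}^{(3)}$, $M_{h,n}^{(3)}$ be the matrix sequences defined in the context (with $M_{h,n}^{(3)}$ extended to negative indices as described there). Then for every nonnegative integer $n$: $$M_{H,n}^{(3)}=bM_{h,n}^{(3)}+(c-rb)M_{h,n-1}^{(3)}+taM_{h,n-2}^{(3)},$$ $$M_{H,n}^{(3)}=aM_{h,n+1}^{(3)}+(b-ra)M_{h,n}^{(3)}+(c-rb-sa)M_{h,n-1}^{(3)}.$$
   Context: The third-order Horadam matrix sequence is the sequence of $3\times3$ matrices defined by $M_{H,n+3}^{(3)}=rM_{H,n+2}^{(3)}+sM_{H,n+1}^{(3)}+tM_{H,n}^{(3)}$ ($n\ge0$) with $M_{H,0}^{(3)}=\begin{pmatrix} b & c-rb & ta\\ a & b-ra & c-rb-sa\\ \frac{1}{t}(c-rb-sa) & a-\frac{r}{t}(c-rb-sa) & \frac1t\big(-sc+(t+rs)b+(s^2-rt)a\big)\end{pmatrix}$, $M_{H,1}^{(3)}=\begin{pmatrix} c & sb+ta & tb\\ b & c-rb & ta\\ a & b-ra & c-rb-sa\end{pmatrix}$, $M_{H,2}^{(3)}=\begin{pmatrix} rc+sb+ta & sc+tb & tc\\ c & sb+ta & tb\\ b & c-rb & ta\end{pmatrix}$. The generalized Tribonacci matrix sequence satisfies the same recurrence with $M_{h,0}^{(3)}=I_3$, $M_{h,1}^{(3)}=\begin{pmatrix} r&s&t\\1&0&0\\0&1&0\end{pmatrix}$, $M_{h,2}^{(3)}=\begin{pmatrix}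 r^2+s&rs+t&rt\\ r&s&t\\ 1&0&0\end{pmatrix}$; it is extended to negative indices by running the recurrence backwards, $M_{h,k}^{(3)}=\frac1t\big(M_{h,k+3}^{(3)}-rM_{h,k+2}^{(3)}-sM_{h,k+1}^{(3)}\big)$ for $k<0$. *)

theory Defs
  imports "HOL-Analysis.Analysis"
begin

type_synonym mat3 = "real^3^3"

definition mat3 :: "real \<Rightarrow> real \<Rightarrow> real \<Rightarrow> real \<Rightarrow> real \<Rightarrow> real \<Rightarrow> real \<Rightarrow> real \<Rightarrow> real \<Rightarrow> mat3" where
  "mat3 x11 x12 x13 x21 x22 x23 x31 x32 x33 =
     vector [vector [x11, x12, x13], vector [x21, x22, x23], vector [x31, x32, x33]]"

fun Mh_nat :: "real \<Rightarrow> real \<Rightarrow> real \<Rightarrow> nat \<Rightarrow> mat3" where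
  "Mh_nat r s t 0 = mat 1"
| "Mh_nat r s t (Suc 0) = mat3 r s t 1 0 0 0 1 0"
| "Mh_nat r s t (Suc (Suc 0)) = mat3 (r^2 + s) (r* s + t) (r*t) r s t 1 0 0"
| "Mh_nat r s t (Suc (Suc (Suc n))) =
     r *\<^sub>R Mh_nat r s t (Suc (Suc n)) + s *\<^sub>R Mh_nat r s t (Suc n) + t *\<^sub>R Mh_nat r s t n"

text \<open>Mh_neg r s t m is the matrix with index -m, obtained by running the recurrence backwards.\<close>
fun Mh_neg :: "real \<Rightarrow> real \<Rightarrow> real \<Rightarrow> nat \<Rightarrow> mat3" where
  "Mh_neg r s t 0 = mat 1"
| "Mh_neg r s t (Suc 0) =
     (1/t) *\<^sub>R (Mh_nat r s t 2 - r *\<^sub>R Mh_nat r s t 1 - s *\<^sub>R Mh_nat r s t 0)"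
| "Mh_neg r s t (Suc (Suc 0)) =
     (1/t) *\<^sub>R (Mh_nat r s t 1 - r *\<^sub>R Mh_nat r s t 0 - s *\<^sub>R Mh_neg r s t 1)"
| "Mh_neg r s t (Suc (Suc (Suc m))) =
     (1/t) *\<^sub>R (Mh_neg r s t m - r *\<^sub>R Mh_neg r s t (Suc m) - s *\<^sub>R Mh_neg r s t (Suc (Suc m)))"

definition Mh :: "real \<Rightarrow> real \<Rightarrow> real \<Rightarrow> int \<Rightarrow> mat3" where
  "Mh r s t k = (if k \<ge> 0 then Mh_nat r s t (nat k) else Mh_neg r s t (nat (- k)))"

fun MH :: "real \<Rightarrow> real \<Rightarrow> real \<Rightarrow> real \<Rightarrow> real \<Rightarrow> real \<Rightarrow> nat \<Rightarrow> mat3" where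
  "MH r s t a b c 0 =
     mat3 b (c - r*b) (t*a)
          a (b - r*a) (c - r*b - s*a)
          ((1/t) * (c - r*b - s*a)) (a - (r/t) * (c - r*b - s*a))
          ((1/t) * (- s*c + (t + r* s)*b + (s^2 - r*t)*a))"
| "MH r s t a b c (Suc 0) =
     mat3 c (s*b + t*a) (t*b)
          b (c - r*b) (t*a)
          a (b - r*a) (c - r*b - s*a)"
| "MH r s t a b c (Suc (Suc 0)) =
     mat3 (r*c + s*b + t*a) (s*c + t*b) (t*c)
          c (s*b + t*a) (t*b)
          b (c - r*b) (t*a)"
| "MH r s t a b c (Suc (Suc (Suc n))) =
     r *\<^sub>R MH r s t a b c (Suc (Suc n)) + s *\<^sub>R MH r s t a b c (Suc n) + t *\<^sub>R MH r s t a b c n"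

end

(* Both sides of the second identity satisfy the recurrence
   X (n + 3) = r X (n + 2) + s X (n + 1) + t X n: the Horadam side by definition, the
   Tribonacci side because its extension to negative indices runs the same recurrence
   backwards (here t \<noteq> 0 is needed), so the recurrence holds for M_h on all of the integers
   and survives shifts and linear combinations. Hence the two sides agree once they agree for
   n = 0, 1, 2, which is a direct 3x3 matrix computation. The first identity follows from the
   second by substituting M_h (n + 1) = r M_h n + s M_h (n - 1) + t M_h (n - 2). *)

theory Submission
  imports Defs
begin

definition third_order_rec ::
    "real \<Rightarrow> real \<Rightarrow> real \<Rightarrow> ('i::comm_semiring_1 \<Rightarrow> 'a::real_vector) \<Rightarrow> bool" where
  "third_order_rec r s t f \<longleftrightarrow> (\<forall>k. f (k + 3) = r *\<^sub>R f (k + 2) + s *\<^sub>R f (k + 1) + t *\<^sub>R f k)"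

lemma third_order_rec_add:
  "third_order_rec r s t f \<Longrightarrow> third_order_rec r s t g \<Longrightarrow> third_order_rec r s t (\<lambda>k. f k + g k)"
  by (simp add: third_order_rec_def algebra_simps)

lemma third_order_rec_scaleR:
  "third_order_rec r s t f \<Longrightarrow> third_order_rec r s t (\<lambda>k. x *\<^sub>R f k)"
  by (simp add: third_order_rec_def algebra_simps)

lemma third_order_rec_shift:
  assumes "third_order_rec r s t f"
  shows "third_order_rec r s t (\<lambda>k. f (k + d))"
proof -
  have "f (k + d + 3) = r *\<^sub>R f (k + d + 2) + s *\<^sub>R f (k + d + 1) + t *\<^sub>R f (k + d)" for k
    using assms unfolding third_order_rec_def by blast
  then show ?thesis
    unfolding third_order_rec_def by (simp add: ac_simps)
qed

lemma third_order_rec_int_step: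
  fixes f :: "int \<Rightarrow> 'a::real_vector"
  assumes "third_order_rec r s t f"
  shows "f (k + 1) = r *\<^sub>R f k + s *\<^sub>R f (k - 1) + t *\<^sub>R f (k - 2)"
proof -
  have "f (k - 2 + 3) = r *\<^sub>R f (k - 2 + 2) + s *\<^sub>R f (k - 2 + 1) + t *\<^sub>R f (k - 2)"
    using assms unfolding third_order_rec_def by blast
  moreover have "k - 2 + 3 = k + 1" "k - 2 + 2 = k" "k - 2 + 1 = k - 1"
    by simp_all
  ultimately show ?thesis
    by simp
qed

lemma third_order_rec_of_nat:
  fixes f :: "'i::comm_ring_1 \<Rightarrow> 'a::real_vector"
  shows "third_order_rec r s t f \<Longrightarrow> third_order_rec r s t (\<lambda>n::nat. f (of_nat n))"
  by (simp add: third_order_rec_def add.commute)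

lemma third_order_rec_unique:
  fixes f g :: "nat \<Rightarrow> 'a::real_vector"
  assumes "third_order_rec r s t f" "third_order_rec r s t g"
    and "f 0 = g 0" "f 1 = g 1" "f 2 = g 2"
  shows "f n = g n"
proof -
  have "f n = g n \<and> f (n + 1) = g (n + 1) \<and> f (n + 2) = g (n + 2)"
  proof (induction n)
    case 0
    then show ?case using assms(3-5) by (simp add: numeral_2_eq_2)
  next
    case (Suc n)
    then have "f (n + 3) = g (n + 3)"
      using assms(1,2) by (simp add: third_order_rec_def)
    with Suc show ?case by (simp add: numeral_3_eq_3)
  qed
  then show ?thesis by simp
qed

lemma third_order_rec_MH: "third_order_rec r s t (MH r s t a b c)"
  by (simp add: third_order_rec_def numeral_3_eq_3 numeral_2_eq_2)

lemma Mh_of_nat: "Mh r s t (int n) = Mh_nat r s t n"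
  by (simp add: Mh_def)

lemma Mh_uminus_of_nat: "Mh r s t (- int m) = Mh_neg r s t m"
  by (cases "m = 0") (simp_all add: Mh_def)

lemma int_cases_nonneg_or_le_minus3:
  fixes k :: int
  obtains (nonneg) n where "k = int n" | (minus_one) "k = - int 1" | (minus_two) "k = - int 2"
    | (le_minus3) m where "k = - int (m + 3)"
proof (cases k rule: int_cases)
  case (nonneg n)
  then show ?thesis
    by (rule that(1))
next
  case (neg n)
  have "n = 0 \<or> n = 1 \<or> n \<ge> 2"
    by arith
  then show ?thesis
    using neg that(2,3) that(4)[of "n - 2"] by auto
qed

lemma forward_step_of_backward_step:
  fixes x u v y :: "'a::real_vector"
  assumes "t \<noteq> 0" and "y = (1/t) *\<^sub>R (x - r *\<^sub>R u - s *\<^sub>R v)"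
  shows "x = r *\<^sub>R u + s *\<^sub>R v + t *\<^sub>R y"
  using assms by simp

lemma third_order_rec_Mh:
  assumes "t \<noteq> 0"
  shows "third_order_rec r s t (Mh r s t)"
  unfolding third_order_rec_def
proof
  fix k :: int
  note forward_step = forward_step_of_backward_step[OF assms]
  show "Mh r s t (k + 3) = r *\<^sub>R Mh r s t (k + 2) + s *\<^sub>R Mh r s t (k + 1) + t *\<^sub>R Mh r s t k"
  proof (cases k rule: int_cases_nonneg_or_le_minus3)
    case (nonneg n)
    then have k3: "k + 3 = int (Suc (Suc (Suc n)))" and k2: "k + 2 = int (Suc (Suc n))"
      and k1: "k + 1 = int (Suc n)"
      by simp_all
    show ?thesis
      unfolding k3 k2 k1 unfolding \<open>k = int n\<close> Mh_of_nat by (rule Mh_nat.simps(4))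
  next
    case minus_one
    then have k3: "k + 3 = int 2" and k2: "k + 2 = int 1" and k1: "k + 1 = int 0"
      by simp_all
    show ?thesis
      unfolding k3 k2 k1 unfolding \<open>k = - int 1\<close> Mh_of_nat Mh_uminus_of_nat
      by (rule forward_step) (simp del: Mh_nat.simps)
  next
    case minus_two
    then have k3: "k + 3 = int 1" and k2: "k + 2 = int 0" and k1: "k + 1 = - int 1"
      by simp_all
    show ?thesis
      unfolding k3 k2 k1 unfolding \<open>k = - int 2\<close> Mh_of_nat Mh_uminus_of_nat
      by (rule forward_step) (simp add: numeral_2_eq_2 del: Mh_nat.simps)
  next
    case (le_minus3 m)
    then have k3: "k + 3 = - int m" and k2: "k + 2 = - int (Suc m)"
      and k1: "k + 1 = - int (Suc (Suc m))" and k: "k = - int (Suc (Suc (Suc m)))"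
      by simp_all
    show ?thesis
      unfolding k3 k2 k1 unfolding k Mh_uminus_of_nat by (rule forward_step, rule Mh_neg.simps(4))
  qed
qed

lemma mat3_add:
  "mat3 x1 x2 x3 x4 x5 x6 x7 x8 x9 + mat3 y1 y2 y3 y4 y5 y6 y7 y8 y9 =
   mat3 (x1 + y1) (x2 + y2) (x3 + y3) (x4 + y4) (x5 + y5) (x6 + y6) (x7 + y7) (x8 + y8) (x9 + y9)"
  by (simp add: vec_eq_iff forall_3 mat3_def)

lemma mat3_diff:
  "mat3 x1 x2 x3 x4 x5 x6 x7 x8 x9 - mat3 y1 y2 y3 y4 y5 y6 y7 y8 y9 =
   mat3 (x1 - y1) (x2 - y2) (x3 - y3) (x4 - y4) (x5 - y5) (x6 - y6) (x7 - y7) (x8 - y8) (x9 - y9)"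
  by (simp add: vec_eq_iff forall_3 mat3_def)

lemma scaleR_mat3:
  "c *\<^sub>R mat3 x1 x2 x3 x4 x5 x6 x7 x8 x9 =
   mat3 (c * x1) (c * x2) (c * x3) (c * x4) (c * x5) (c * x6) (c * x7) (c * x8) (c * x9)"
  by (simp add: vec_eq_iff forall_3 mat3_def)

lemma mat3_eq_iff:
  "mat3 x1 x2 x3 x4 x5 x6 x7 x8 x9 = mat3 y1 y2 y3 y4 y5 y6 y7 y8 y9 \<longleftrightarrow>
   x1 = y1 \<and> x2 = y2 \<and> x3 = y3 \<and> x4 = y4 \<and> x5 = y5 \<and> x6 = y6 \<and> x7 = y7 \<and> x8 = y8 \<and> x9 = y9"
  by (simp add: vec_eq_iff forall_3 mat3_def)

lemma mat_1_eq_mat3: "(mat 1 :: mat3) = mat3 1 0 0 0 1 0 0 0 1"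
  by (simp add: vec_eq_iff forall_3 mat3_def mat_def)

lemma Mh_small_index_values:
  assumes "t \<noteq> 0"
  shows "Mh r s t (-1) = mat3 0 1 0 0 0 1 (1/t) (-r/t) (-s/t)"
    and "Mh r s t 0 = mat3 1 0 0 0 1 0 0 0 1"
    and "Mh r s t 1 = mat3 r s t 1 0 0 0 1 0"
    and "Mh r s t 2 = mat3 (r^2 + s) (r * s + t) (r * t) r s t 1 0 0"
    and "Mh r s t 3 =
      mat3 (r^3 + 2 * r * s + t) (r^2 * s + r * t + s^2) (r^2 * t + s * t) (r^2 + s) (r * s + t) (r * t) r s t"
proof -
  have "Mh r s t (- int 1) = (1/t) *\<^sub>R (Mh_nat r s t 2 - r *\<^sub>R Mh_nat r s t 1 - s *\<^sub>R Mh_nat r s t 0)"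
    unfolding Mh_uminus_of_nat by (simp del: Mh_nat.simps)
  then show "Mh r s t (-1) = mat3 0 1 0 0 0 1 (1/t) (-r/t) (-s/t)"
    using assms
    by (simp add: numeral_2_eq_2 mat_1_eq_mat3 mat3_diff scaleR_mat3 mat3_eq_iff
        power2_eq_square field_simps)
  have "Mh r s t (int 3) = r *\<^sub>R Mh_nat r s t 2 + s *\<^sub>R Mh_nat r s t 1 + t *\<^sub>R Mh_nat r s t 0"
    unfolding Mh_of_nat numeral_3_eq_3 numeral_2_eq_2 One_nat_def by (rule Mh_nat.simps(4))
  then show "Mh r s t 3 =
      mat3 (r^3 + 2 * r * s + t) (r^2 * s + r * t + s^2) (r^2 * t + s * t) (r^2 + s) (r * s + t) (r * t) r s t"
    by (simp add: numeral_2_eq_2 mat_1_eq_mat3 mat3_add scaleR_mat3 mat3_eq_iff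
        power2_eq_square power3_eq_cube algebra_simps)
  show "Mh r s t 0 = mat3 1 0 0 0 1 0 0 0 1"
    using Mh_of_nat[of r s t 0] by (simp add: mat_1_eq_mat3)
  show "Mh r s t 1 = mat3 r s t 1 0 0 0 1 0"
    using Mh_of_nat[of r s t 1] by simp
  show "Mh r s t 2 = mat3 (r^2 + s) (r * s + t) (r * t) r s t 1 0 0"
    using Mh_of_nat[of r s t 2] by (simp add: numeral_2_eq_2)
qed

lemma MH_eq_Mh_combination_base:
  assumes "t \<noteq> 0" and "n \<le> 2"
  shows "MH r s t a b c n =
    a *\<^sub>R Mh r s t (int n + 1) + (b - r * a) *\<^sub>R Mh r s t (int n)
    + (c - r * b - s * a) *\<^sub>R Mh r s t (int n - 1)"
proof -
  note Mh_values = Mh_small_index_values[OF \<open>t \<noteq> 0\<close>]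
  consider "n = 0" | "n = 1" | "n = 2"
    using \<open>n \<le> 2\<close> by linarith
  then show ?thesis
  proof cases
    case 1
    then show ?thesis
      using \<open>t \<noteq> 0\<close> by (simp add: Mh_values mat3_add scaleR_mat3 mat3_eq_iff power2_eq_square field_simps)
  next
    case 2
    then show ?thesis
      by (simp add: Mh_values mat3_add scaleR_mat3 mat3_eq_iff power2_eq_square algebra_simps)
  next
    case 3
    then show ?thesis
      by (simp add: Mh_values numeral_2_eq_2 mat3_add scaleR_mat3 mat3_eq_iff
          power2_eq_square power3_eq_cube algebra_simps)
  qed
qed

theorem theorem3p2:
  fixes r s t a b c :: real and n :: nat
  assumes "t \<noteq> 0"
  shows "MH r s t a b c n =
           b *\<^sub>R Mh r s t (int n) + (c - r * b) *\<^sub>R Mh r s t (int n - 1)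
           + (t * a) *\<^sub>R Mh r s t (int n - 2)
       \<and> MH r s t a b c n =
           a *\<^sub>R Mh r s t (int n + 1) + (b - r * a) *\<^sub>R Mh r s t (int n)
           + (c - r * b - s * a) *\<^sub>R Mh r s t (int n - 1)"
proof -
  let ?G = "\<lambda>k. a *\<^sub>R Mh r s t (k + 1) + (b - r * a) *\<^sub>R Mh r s t k
    + (c - r * b - s * a) *\<^sub>R Mh r s t (k - 1)"
  have Mh_rec: "third_order_rec r s t (Mh r s t)"
    using assms by (rule third_order_rec_Mh)
  have "third_order_rec r s t (\<lambda>k. Mh r s t (k + 1))" "third_order_rec r s t (\<lambda>k. Mh r s t (k - 1))"
    using third_order_rec_shift[OF Mh_rec, of 1] third_order_rec_shift[OF Mh_rec, of "-1"] by simp_all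
  then have G_rec: "third_order_rec r s t ?G"
    using Mh_rec by (intro third_order_rec_add third_order_rec_scaleR)
  have second_identity: "MH r s t a b c n = ?G (int n)"
    by (rule third_order_rec_unique[OF third_order_rec_MH third_order_rec_of_nat[OF G_rec]];
        rule MH_eq_Mh_combination_base[OF assms]; simp)
  moreover note third_order_rec_int_step[OF Mh_rec, of "int n"]
  ultimately have "MH r s t a b c n =
      b *\<^sub>R Mh r s t (int n) + (c - r * b) *\<^sub>R Mh r s t (int n - 1) + (t * a) *\<^sub>R Mh r s t (int n - 2)"
    by (simp add: algebra_simps)
  with second_identity show ?thesis
    by simp
qed

end
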